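(* Let $n\in\mathbb{N}$ and $(\sigma_1,\delta_2,\sigma_2,\dots,\delta_n,\sigma_n)\in\Sigma_n$, and let $$I_n(\sigma_1,\delta_2,\dots,\delta_n,\sigma_n)=\{x\in(0,1)\colon d_1(x)=\sigma_1,\ \epsilon_i(x)=\delta_i,\ d_i(x)=\sigma_i\ (2\le i\le n)\}.$$ If $\sigma_n$ is odd, this set is a singleton. If $\sigma_n$ is even, it is an open interval with endpoints $$x_1=\sum_{i=1}^{n-1}\frac{\delta_i}{\sigma_1\cdots\sigma_i}+\frac{\delta_n}{\sigma_1\cdots\sigma_{n-1}(\sigma_n-1)},\qquad x_2=\sum_{i=1}^{n-1}\frac{\delta_i}{\sigma_1\cdots\sigma_i}+\frac{\delta_n}{\sigma_1\cdots\sigma_{n-1}(\sigma_n+1)}$$ (with $\delta_1=1$), namely $(x_1,x_2)$ if $\delta_n=-1$ and $(x_2,x_1)$ if $\delta_n=1$. Consequently its length is $0$ if $\sigma_n$ is odd and $\frac{2}{\sigma_1\sigma_2\cdots\sigma_{n-1}(\sigma_n-1)(\sigma_n+1)}$ if $\sigma_n$ is even.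
   Context: Define $T\colon[0,1)\to[0,1)$ by: for $k\in\mathbb{N}$, $Tx=\lceil 1/x\rceil x-1$ if $x\in(\frac{1}{2k},\frac{1}{2k-1})$; $Tx=1-\lfloor 1/x\rfloor x$ if $x\in(\frac{1}{2k+1},\frac{1}{2k})$; $Tx=0$ if $x\in\{0\}\cup\{1/n\colon n\ge 2\}$. For $x\in(0,1)$ define $d_1(x)=\lceil 1/x\rceil$, $s_1(x)=1$ if $x\in[\frac{1}{2k},\frac{1}{2k-1})$ for some $k$, and $d_1(x)=\lfloor 1/x\rfloor$, $s_1(x)=-1$ if $x\in[\frac{1}{2k+1},\frac{1}{2k})$ for some $k$. Set $d_{n+1}(x)=d_1(T^nx)$, $s_{n+1}(x)=s_1(T^nx)$ (when $T^nx\ne0$), $\epsilon_1(x)=1$, $\epsilon_{n+1}(x)=\prod_{k=1}^n s_k(x)$. $\Sigma_1=\{(\sigma_1)\colon \sigma_1\in\mathbb{N},\sigma_1\ge2\}$, and for $n\ge2$, $\Sigma_n$ is the set of tuples $(\sigma_1,\delta_2,\sigma_2,\dots,\delta_n,\sigma_n)$ with $\delta_i\in\{1,-1\}$, positive integers $2\le\sigma_1\le\sigma_2\le\cdots\le\sigma_n$ with $\sigma_i$ even for $1\le i\le n-1$, and (with $\delta_1:=1$) $\sigma_{i+1}\ge\sigma_i+2$ whenever $\delta_{i+1}=-\delta_i$, $1\le i\le n-1$. *)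

theory Defs
  imports "HOL-Analysis.Analysis"
begin

definition Tmap :: "real \<Rightarrow> real" where
  "Tmap x =
     (if x = 0 \<or> (\<exists>m::nat. m \<ge> 2 \<and> x = 1 / real m) then 0
      else if (\<exists>k::nat. k \<ge> 1 \<and> 1 / real (2*k) < x \<and> x < 1 / real (2*k - 1))
        then real_of_int \<lceil>1 / x\<rceil> * x - 1
      else if (\<exists>k::nat. k \<ge> 1 \<and> 1 / real (2*k+1) < x \<and> x < 1 / real (2*k))
        then 1 - real_of_int \<lfloor>1 / x\<rfloor> * x
      else 0)"

definition d1 :: "real \<Rightarrow> int" where
  "d1 x = (if \<exists>k::nat. k \<ge> 1 \<and> 1 / real (2*k) \<le> x \<and> x < 1 / real (2*k - 1)
           then \<lceil>1 / x\<rceil> else \<lfloor>1 / x\<rfloor>)"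

definition s1 :: "real \<Rightarrow> int" where
  "s1 x = (if \<exists>k::nat. k \<ge> 1 \<and> 1 / real (2*k) \<le> x \<and> x < 1 / real (2*k - 1)
           then 1 else -1)"

text \<open>Digits, 1-indexed: d_n(x) = d_1(T^(n-1) x), meaningful when T^(n-1) x \<noteq> 0.\<close>
definition digit :: "nat \<Rightarrow> real \<Rightarrow> int" where
  "digit n x = d1 ((Tmap ^^ (n - 1)) x)"

definition sdigit :: "nat \<Rightarrow> real \<Rightarrow> int" where
  "sdigit n x = s1 ((Tmap ^^ (n - 1)) x)"

definition eps :: "nat \<Rightarrow> real \<Rightarrow> int" where
  "eps n x = (\<Prod>k\<in>{1..<n}. sdigit k x)"

text \<open>Admissible tuples Sigma_n, represented by \<sigma>, \<delta> on indices 1..n, with the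
  convention \<delta> 1 = 1.\<close>
definition in_Sigma :: "nat \<Rightarrow> (nat \<Rightarrow> nat) \<Rightarrow> (nat \<Rightarrow> int) \<Rightarrow> bool" where
  "in_Sigma n \<sigma> \<delta> \<longleftrightarrow>
     n \<ge> 1 \<and> \<delta> 1 = 1 \<and>
     (\<forall>i\<in>{2..n}. \<delta> i = 1 \<or> \<delta> i = -1) \<and>
     2 \<le> \<sigma> 1 \<and>
     (\<forall>i\<in>{1..<n}. \<sigma> i \<le> \<sigma> (i+1)) \<and>
     (\<forall>i\<in>{1..<n}. even (\<sigma> i)) \<and>
     (\<forall>i\<in>{1..<n}. \<delta> (i+1) = - \<delta> i \<longrightarrow> \<sigma> (i+1) \<ge> \<sigma> i + 2)"

definition cyl :: "nat \<Rightarrow> (nat \<Rightarrow> nat) \<Rightarrow> (nat \<Rightarrow> int) \<Rightarrow> real set" where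
  "cyl n \<sigma> \<delta> = {x. 0 < x \<and> x < 1 \<and>
      (\<forall>i\<in>{1..n}. (Tmap ^^ (i - 1)) x \<noteq> 0 \<and> digit i x = int (\<sigma> i)) \<and>
      (\<forall>i\<in>{2..n}. eps i x = \<delta> i)}"

end

theory Submission
  imports Defs
begin

(*
  Every x in (0,1) satisfies x = (1 + s_1(x) T x) / d_1(x); conversely, for even m >= 2
  and a sign s, the inverse branch z |-> (1 + s z) / m sends every z > 0 with (m - s) z < 1
  to a point with d_1 = m, s_1 = s and T-image z.  A point z with first digit sigma
  satisfies (sigma - 1) z < 1, so the conditions defining Sigma_n (sigma_i even,
  sigma_{i+1} >= sigma_i, and sigma_{i+1} >= sigma_i + 2 when the sign flips) guarantee
  that T^i x always lies in the domain of the next inverse branch.  Composing the branches,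
  I_n is the image of {y in (0,1). d_1(y) = sigma_n} under the affine map
  y |-> S + delta_n y / (sigma_1 ... sigma_{n-1}), and that set is the open interval
  (1/(sigma_n + 1), 1/(sigma_n - 1)) for even sigma_n and the point 1/sigma_n for odd sigma_n.
*)

lemma ceiling_eq_not_Ints_iff:
  fixes u :: real
  shows "\<lceil>u\<rceil> = c \<and> u \<notin> \<int> \<longleftrightarrow> of_int c - 1 < u \<and> u < of_int c"
proof
  assume u: "of_int c - 1 < u \<and> u < of_int c"
  have "u \<notin> \<int>"
  proof
    assume "u \<in> \<int>"
    then obtain j where "u = of_int j" by (elim Ints_cases)
    with u have "c - 1 < j \<and> j < c" by linarith
    then show False by linarith
  qed
  with u show "\<lceil>u\<rceil> = c \<and> u \<notin> \<int>" by (simp add: ceiling_eq_iff)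
qed (auto simp: ceiling_eq_iff order.order_iff_strict)

lemma floor_ceiling_not_Ints:
  fixes u :: real
  assumes "u \<notin> \<int>"
  shows "of_int \<lfloor>u\<rfloor> < u" "u < of_int \<lceil>u\<rceil>" "\<lceil>u\<rceil> = \<lfloor>u\<rfloor> + 1"
proof -
  show "of_int \<lfloor>u\<rfloor> < u"
    using assms floor_correct[of u] by (metis Ints_of_int order_le_imp_less_or_eq)
  then show "u < of_int \<lceil>u\<rceil>" "\<lceil>u\<rceil> = \<lfloor>u\<rfloor> + 1"
    using assms ceiling_eq_not_Ints_iff[of u "\<lfloor>u\<rfloor> + 1"] by (auto simp: floor_correct)
qed

lemma even_int_ge2_iff: "c \<ge> 2 \<Longrightarrow> even c \<longleftrightarrow> (\<exists>k::nat. k \<ge> 1 \<and> c = 2 * int k)"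
  for c :: int
  by (auto elim!: evenE intro!: exI[of _ "nat (c div 2)"])

lemma odd_int_ge2_iff: "c \<ge> 2 \<Longrightarrow> odd c \<longleftrightarrow> (\<exists>k::nat. k \<ge> 1 \<and> c = 2 * int k + 1)"
  for c :: int
  by (auto elim!: oddE intro!: exI[of _ "nat (c div 2)"])

lemma ceiling_inverse_ge2: "0 < x \<Longrightarrow> x < 1 \<Longrightarrow> \<lceil>1/x\<rceil> \<ge> 2"
  for x :: real
  by (simp add: le_ceiling_iff field_simps)

lemma even_branch_iff:
  fixes x :: real
  assumes "0 < x" "x < 1"
  shows "(\<exists>k::nat. k \<ge> 1 \<and> 1 / real (2*k) \<le> x \<and> x < 1 / real (2*k - 1)) \<longleftrightarrow> even \<lceil>1/x\<rceil>"
proof -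
  have "1 / real (2*k) \<le> x \<and> x < 1 / real (2*k - 1) \<longleftrightarrow> \<lceil>1/x\<rceil> = 2 * int k" if "k \<ge> 1" for k
    using that assms by (auto simp: ceiling_eq_iff of_nat_diff field_simps)
  then show ?thesis
    using even_int_ge2_iff[OF ceiling_inverse_ge2[OF assms]] by blast
qed

lemma even_branch_open_iff:
  fixes x :: real
  assumes "0 < x" "x < 1"
  shows "(\<exists>k::nat. k \<ge> 1 \<and> 1 / real (2*k) < x \<and> x < 1 / real (2*k - 1)) \<longleftrightarrow>
    even \<lceil>1/x\<rceil> \<and> 1/x \<notin> \<int>"
proof -
  have "1 / real (2*k) < x \<and> x < 1 / real (2*k - 1) \<longleftrightarrow> \<lceil>1/x\<rceil> = 2 * int k \<and> 1/x \<notin> \<int>"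
    if "k \<ge> 1" for k
    unfolding ceiling_eq_not_Ints_iff using that assms by (auto simp: of_nat_diff field_simps)
  then show ?thesis
    using even_int_ge2_iff[OF ceiling_inverse_ge2[OF assms]] by blast
qed

lemma odd_branch_open_iff:
  fixes x :: real
  assumes "0 < x" "x < 1"
  shows "(\<exists>k::nat. k \<ge> 1 \<and> 1 / real (2*k+1) < x \<and> x < 1 / real (2*k)) \<longleftrightarrow>
    odd \<lceil>1/x\<rceil> \<and> 1/x \<notin> \<int>"
proof -
  have "1 / real (2*k+1) < x \<and> x < 1 / real (2*k) \<longleftrightarrow> \<lceil>1/x\<rceil> = 2 * int k + 1 \<and> 1/x \<notin> \<int>"
    if "k \<ge> 1" for k
    unfolding ceiling_eq_not_Ints_iff using that assms by (auto simp: field_simps)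
  then show ?thesis
    using odd_int_ge2_iff[OF ceiling_inverse_ge2[OF assms]] by blast
qed

lemma inverse_of_nat_iff:
  fixes x :: real
  assumes "0 < x" "x < 1"
  shows "(\<exists>m::nat. m \<ge> 2 \<and> x = 1 / real m) \<longleftrightarrow> 1/x \<in> \<int>"
proof
  assume "1/x \<in> \<int>"
  then obtain j where j: "1/x = of_int j" by (elim Ints_cases)
  have "1 < 1/x" using assms by simp
  with j have "j \<ge> 2" by simp
  with j show "\<exists>m::nat. m \<ge> 2 \<and> x = 1 / real m"
    using assms by (intro exI[of _ "nat j"]) (auto simp: field_simps)
qed auto

lemma d1_eq:
  assumes "0 < x" "x < 1"
  shows "d1 x = (if even \<lceil>1/x\<rceil> then \<lceil>1/x\<rceil> else \<lfloor>1/x\<rfloor>)"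
  unfolding d1_def even_branch_iff[OF assms] ..

lemma s1_eq:
  assumes "0 < x" "x < 1"
  shows "s1 x = (if even \<lceil>1/x\<rceil> then 1 else -1)"
  unfolding s1_def even_branch_iff[OF assms] ..

lemma s1_cases: "s1 x = 1 \<or> s1 x = -1"
  by (simp add: s1_def)

lemma Tmap_eq:
  fixes x :: real
  assumes "0 < x" "x < 1"
  shows "Tmap x = (if 1/x \<in> \<int> then 0
    else if even \<lceil>1/x\<rceil> then of_int \<lceil>1/x\<rceil> * x - 1 else 1 - of_int \<lfloor>1/x\<rfloor> * x)"
  using assms unfolding Tmap_def inverse_of_nat_iff[OF assms] even_branch_open_iff[OF assms]
    odd_branch_open_iff[OF assms] by auto

section \<open>One step of the expansion\<close>

lemma Tmap_range_and_expansion: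
  fixes x :: real
  assumes "0 < x" "x < 1"
  shows "0 \<le> Tmap x" "Tmap x < 1" "x = (1 + of_int (s1 x) * Tmap x) / of_int (d1 x)"
proof -
  define u where "u = 1/x"
  have x: "x = 1/u" using assms by (simp add: u_def)
  have "0 \<le> Tmap x \<and> Tmap x < 1 \<and> x = (1 + of_int (s1 x) * Tmap x) / of_int (d1 x)"
  proof (cases "u \<in> \<int>")
    case True
    then have "\<lceil>u\<rceil> = u" "\<lfloor>u\<rfloor> = u" by (auto elim: Ints_cases)
    with True show ?thesis using assms
      by (simp add: Tmap_eq d1_eq s1_eq flip: u_def) (simp add: x)
  next
    case False
    note floor_ceiling_not_Ints[OF False]
    with False assms show ?thesis unfolding x by (auto simp: Tmap_eq d1_eq s1_eq field_simps)
  qed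
  then show "0 \<le> Tmap x" "Tmap x < 1" "x = (1 + of_int (s1 x) * Tmap x) / of_int (d1 x)"
    by auto
qed

lemma d1_less_inverse_plus_one:
  fixes x :: real
  assumes "0 < x" "x < 1"
  shows "of_int (d1 x) < 1/x + 1"
  using ceiling_correct[of "1/x"] of_int_floor_le[of "1/x"] unfolding d1_eq[OF assms] by (simp; linarith)

lemma d1_eq_even_iff:
  fixes x :: real
  assumes "0 < x" "x < 1" "even m"
  shows "d1 x = int m \<longleftrightarrow> real m - 1 < 1/x \<and> 1/x < real m + 1"
proof (cases "1/x \<in> \<int>")
  case True
  then obtain j where j: "1/x = of_int j" by (elim Ints_cases)
  then have "d1 x = j" by (simp add: d1_eq[OF assms(1,2)])
  with j show ?thesis by auto
next
  case False
  note fc = floor_ceiling_not_Ints[OF False]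
  have "real m - 1 < 1/x \<longleftrightarrow> int m - 1 \<le> \<lfloor>1/x\<rfloor>" "1/x < real m + 1 \<longleftrightarrow> \<lfloor>1/x\<rfloor> \<le> int m"
    using fc floor_correct[of "1/x"] by linarith+
  moreover have "(if even (f + 1) then f + 1 else f) = int m \<longleftrightarrow> int m - 1 \<le> f \<and> f \<le> int m"
    for f :: int
    using assms(3) by presburger
  ultimately show ?thesis
    unfolding d1_eq[OF assms(1,2)] fc(3) by simp
qed

lemma d1_eq_odd_iff:
  fixes x :: real
  assumes "0 < x" "x < 1" "odd m"
  shows "d1 x = int m \<longleftrightarrow> 1/x = real m"
proof (cases "1/x \<in> \<int>")
  case True
  then obtain j where j: "1/x = of_int j" by (elim Ints_cases)
  then have "d1 x = j" by (simp add: d1_eq[OF assms(1,2)])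
  with j show ?thesis by auto
next
  case False
  then have "1/x \<noteq> real m" by (metis Ints_of_nat)
  moreover have "(if even (\<lfloor>1/x\<rfloor> + 1) then \<lfloor>1/x\<rfloor> + 1 else \<lfloor>1/x\<rfloor>) \<noteq> int m"
    using assms(3) by presburger
  ultimately show ?thesis
    unfolding d1_eq[OF assms(1,2)] floor_ceiling_not_Ints(3)[OF False] by simp
qed

definition first_digit_set :: "nat \<Rightarrow> real set" where
  "first_digit_set m = {x. 0 < x \<and> x < 1 \<and> d1 x = int m}"

lemma first_digit_set_even:
  assumes "even m" "m \<ge> 2"
  shows "first_digit_set m = {1 / (real m + 1)<..<1 / (real m - 1)}"
proof (intro set_eqI)
  fix x
  have "x \<in> {1 / (real m + 1)<..<1 / (real m - 1)} \<longleftrightarrow>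
      0 < x \<and> real m - 1 < 1/x \<and> 1/x < real m + 1"
    using assms(2) by (auto simp: field_simps)
  moreover have "x < 1" if "0 < x" "real m - 1 < 1/x"
  proof -
    have "1 < 1/x" using that(2) assms(2) by linarith
    with that(1) show "x < 1" by (simp add: less_divide_eq)
  qed
  ultimately show "x \<in> first_digit_set m \<longleftrightarrow> x \<in> {1 / (real m + 1)<..<1 / (real m - 1)}"
    unfolding first_digit_set_def using d1_eq_even_iff[OF _ _ assms(1), of x] by auto
qed

lemma first_digit_set_odd:
  assumes "odd m" "m \<ge> 2"
  shows "first_digit_set m = {1 / real m}"
proof (intro set_eqI)
  fix x
  have "x = 1 / real m \<longleftrightarrow> 0 < x \<and> x < 1 \<and> 1/x = real m"
  proof
    assume "0 < x \<and> x < 1 \<and> 1/x = real m"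
    then show "x = 1 / real m" by (metis divide_divide_eq_right div_by_1 mult_1)
  qed (use assms(2) in \<open>auto simp: divide_less_eq\<close>)
  then show "x \<in> first_digit_set m \<longleftrightarrow> x \<in> {1 / real m}"
    unfolding first_digit_set_def using d1_eq_odd_iff[OF _ _ assms(1), of x] by auto
qed

lemma inverse_branch:
  fixes z :: real
  assumes m: "even m" "m \<ge> 2" and s: "s = 1 \<or> s = -1"
    and z: "0 < z" "(real m - of_int s) * z < 1"
  defines "x \<equiv> (1 + of_int s * z) / real m"
  shows "0 < x" "x < 1" "d1 x = int m" "s1 x = s" "Tmap x = z"
proof -
  have "1 \<le> real m - of_int s" using s m(2) by auto
  with z have "z < 1" by (smt (verit) mult_le_cancel_right1)
  then show x: "0 < x" "x < 1"
    using s z m(2) by (auto simp: x_def field_simps)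
  have "0 < z * real m" using z(1) m(2) by simp
  with s z \<open>z < 1\<close> have "real m - 1 < 1/x \<and> 1/x < real m + 1"
    by (auto simp: x_def field_simps)
  then show d1: "d1 x = int m" using d1_eq_even_iff[OF x m(1)] by blast
  have "x * real m = 1 + of_int (s1 x) * Tmap x"
    using Tmap_range_and_expansion(3)[OF x] m(2) by (simp add: d1 field_simps)
  moreover have "x * real m = 1 + of_int s * z" using m(2) by (simp add: x_def)
  ultimately have "of_int (s1 x) * Tmap x = of_int s * z" by simp
  \<comment> \<open>as \<open>Tmap x \<ge> 0\<close> and \<open>z > 0\<close>, the two signs must agree\<close>
  then show "s1 x = s" "Tmap x = z"
    using s s1_cases[of x] Tmap_range_and_expansion(1)[OF x] z(1) by auto
qed

section \<open>Cylinder sets\<close>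

lemma funpow_pos_right: "i \<ge> 1 \<Longrightarrow> (f ^^ i) x = (f ^^ (i - 1)) (f x)"
  by (cases i) (simp_all add: funpow_Suc_right del: funpow.simps)

lemma digit_Suc_0: "digit (Suc 0) x = d1 x"
  by (simp add: digit_def)

lemma digit_Suc: "i \<ge> 1 \<Longrightarrow> digit (Suc i) x = digit i (Tmap x)"
  by (simp add: digit_def funpow_pos_right)

lemma sdigit_Suc: "i \<ge> 1 \<Longrightarrow> sdigit (Suc i) x = sdigit i (Tmap x)"
  by (simp add: sdigit_def funpow_pos_right)

lemma eps_2: "eps 2 x = s1 x"
  by (simp add: eps_def sdigit_def numeral_2_eq_2)

lemma eps_Suc:
  assumes "i \<ge> 1"
  shows "eps (Suc i) x = s1 x * eps i (Tmap x)"
proof -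
  have "eps (Suc i) x = sdigit 1 x * (\<Prod>k\<in>{Suc 1..<Suc i}. sdigit k x)"
    unfolding eps_def using assms by (intro prod.atLeast_Suc_lessThan) simp
  also have "(\<Prod>k\<in>{Suc 1..<Suc i}. sdigit k x) = (\<Prod>k\<in>{1..<i}. sdigit (Suc k) x)"
    by (rule prod.shift_bounds_Suc_ivl)
  also have "\<dots> = (\<Prod>k\<in>{1..<i}. sdigit k (Tmap x))"
    by (rule prod.cong) (auto simp: sdigit_Suc)
  finally show ?thesis by (simp add: sdigit_def eps_def)
qed

lemma in_Sigma_digit_ge2: "in_Sigma n \<sigma> \<delta> \<Longrightarrow> i \<in> {1..n} \<Longrightarrow> \<sigma> i \<ge> 2"
proof (induction i)
  case (Suc i)
  show ?case
  proof (cases "i = 0")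
    case False
    then have "i \<in> {1..<n}" using Suc.prems(2) by simp
    then have "\<sigma> i \<le> \<sigma> (Suc i)" using Suc.prems(1) by (simp add: in_Sigma_def)
    with Suc False show ?thesis by simp
  qed (use Suc.prems in \<open>simp add: in_Sigma_def\<close>)
qed simp

lemma in_Sigma_sign: "in_Sigma n \<sigma> \<delta> \<Longrightarrow> i \<in> {1..n} \<Longrightarrow> \<delta> i = 1 \<or> \<delta> i = -1"
  by (cases "i = 1") (auto simp: in_Sigma_def)

lemma in_Sigma_head:
  assumes "in_Sigma (Suc n) \<sigma> \<delta>" "n \<ge> 1"
  shows "even (\<sigma> 1)" "\<sigma> 1 \<ge> 2" "\<delta> 2 = 1 \<or> \<delta> 2 = -1"
    "real (\<sigma> 1) - of_int (\<delta> 2) \<le> real (\<sigma> 2) - 1"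
proof -
  have "1 \<in> {1..<Suc n}" using assms(2) by simp
  then have "even (\<sigma> 1)" "\<sigma> 1 \<le> \<sigma> 2" "\<delta> 2 = - \<delta> 1 \<longrightarrow> \<sigma> 2 \<ge> \<sigma> 1 + 2"
    using assms(1) unfolding in_Sigma_def by (auto simp: numeral_2_eq_2)
  moreover have "\<delta> 1 = 1" "\<sigma> 1 \<ge> 2" using assms(1) by (simp_all add: in_Sigma_def)
  moreover have "\<delta> 2 = 1 \<or> \<delta> 2 = -1" using assms by (intro in_Sigma_sign) auto
  ultimately show "even (\<sigma> 1)" "\<sigma> 1 \<ge> 2" "\<delta> 2 = 1 \<or> \<delta> 2 = -1"
    "real (\<sigma> 1) - of_int (\<delta> 2) \<le> real (\<sigma> 2) - 1"
    by auto
qed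

(* Since eps_{i+1}(x) = s_1(x) eps_i(T x), the sign data of T x is delta shifted by one
   and multiplied by delta_2. *)
definition tail_signs :: "(nat \<Rightarrow> int) \<Rightarrow> nat \<Rightarrow> int" where
  "tail_signs \<delta> i = \<delta> 2 * \<delta> (Suc i)"

lemma tail_signs_cancel: "\<delta> 2 = 1 \<or> \<delta> 2 = -1 \<Longrightarrow> \<delta> 2 * tail_signs \<delta> i = \<delta> (Suc i)"
  by (auto simp: tail_signs_def)

lemma in_Sigma_tail:
  assumes "in_Sigma (Suc n) \<sigma> \<delta>" "n \<ge> 1"
  shows "in_Sigma n (\<sigma> \<circ> Suc) (tail_signs \<delta>)"
  unfolding in_Sigma_def
proof (intro conjI ballI)
  have \<delta>2: "\<delta> 2 = 1 \<or> \<delta> 2 = -1" and "\<sigma> 1 \<ge> 2"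
    and "real (\<sigma> 1) - of_int (\<delta> 2) \<le> real (\<sigma> 2) - 1"
    using in_Sigma_head[OF assms] by auto
  then show "tail_signs \<delta> 1 = 1" "2 \<le> (\<sigma> \<circ> Suc) 1"
    by (auto simp: tail_signs_def numeral_2_eq_2)
  show "tail_signs \<delta> i = 1 \<or> tail_signs \<delta> i = -1" if "i \<in> {2..n}" for i
    using in_Sigma_sign[OF assms(1), of "Suc i"] that \<delta>2 by (auto simp: tail_signs_def)
  fix i assume "i \<in> {1..<n}"
  then have i: "Suc i \<in> {1..<Suc n}" by simp
  then show "(\<sigma> \<circ> Suc) i \<le> (\<sigma> \<circ> Suc) (i + 1)" "even ((\<sigma> \<circ> Suc) i)"
    using assms(1) unfolding in_Sigma_def by auto
  have "tail_signs \<delta> (i + 1) = - tail_signs \<delta> i \<longleftrightarrow> \<delta> (Suc i + 1) = - \<delta> (Suc i)"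
    using \<delta>2 by (auto simp: tail_signs_def)
  with i assms(1) show "tail_signs \<delta> (i + 1) = - tail_signs \<delta> i \<longrightarrow>
      (\<sigma> \<circ> Suc) i + 2 \<le> (\<sigma> \<circ> Suc) (i + 1)"
    unfolding in_Sigma_def by auto
qed (use assms in simp)

lemma Icc_1_Suc: "{1..Suc n} = insert 1 (Suc ` {1..n})"
  by (auto simp: image_iff)

lemma Icc_2_Suc: "n \<ge> 1 \<Longrightarrow> {2..Suc n} = insert 2 (Suc ` {2..n})"
  by (auto simp: image_iff)

lemma mem_cyl_Suc_iff:
  assumes n: "n \<ge> 1" and \<delta>2: "\<delta> 2 = 1 \<or> \<delta> 2 = -1"
  shows "x \<in> cyl (Suc n) \<sigma> \<delta> \<longleftrightarrow>
    0 < x \<and> x < 1 \<and> d1 x = int (\<sigma> 1) \<and> s1 x = \<delta> 2 \<and>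
    Tmap x \<in> cyl n (\<sigma> \<circ> Suc) (tail_signs \<delta>)"
proof -
  have digits: "(\<forall>i\<in>{1..Suc n}. (Tmap ^^ (i - 1)) x \<noteq> 0 \<and> digit i x = int (\<sigma> i)) \<longleftrightarrow>
      x \<noteq> 0 \<and> d1 x = int (\<sigma> 1) \<and>
      (\<forall>i\<in>{1..n}. (Tmap ^^ (i - 1)) (Tmap x) \<noteq> 0 \<and> digit i (Tmap x) = int ((\<sigma> \<circ> Suc) i))"
    unfolding Icc_1_Suc ball_simps by (simp add: digit_Suc_0 digit_Suc funpow_pos_right)
  have signs: "(\<forall>i\<in>{2..Suc n}. eps i x = \<delta> i) \<longleftrightarrow>
      s1 x = \<delta> 2 \<and> (\<forall>i\<in>{2..n}. eps i (Tmap x) = tail_signs \<delta> i)"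
    using \<delta>2 unfolding Icc_2_Suc[OF n] ball_simps by (auto simp: eps_2 eps_Suc tail_signs_def)
  have "(\<forall>i\<in>{1..n}. (Tmap ^^ (i - 1)) (Tmap x) \<noteq> 0 \<and> digit i (Tmap x) = int ((\<sigma> \<circ> Suc) i))
      \<Longrightarrow> Tmap x \<noteq> 0"
    using n by (auto dest!: bspec[where x=1])
  moreover have "0 < x \<Longrightarrow> x < 1 \<Longrightarrow> Tmap x \<noteq> 0 \<Longrightarrow> 0 < Tmap x \<and> Tmap x < 1"
    using Tmap_range_and_expansion(1,2)[of x] by auto
  ultimately show ?thesis
    unfolding cyl_def mem_Collect_eq digits signs by blast
qed

lemma cyl_1: "cyl 1 \<sigma> \<delta> = first_digit_set (\<sigma> 1)"
  by (auto simp: cyl_def first_digit_set_def digit_Suc_0)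

lemma cyl_Suc:
  assumes \<Sigma>: "in_Sigma (Suc n) \<sigma> \<delta>" and n: "n \<ge> 1"
  shows "cyl (Suc n) \<sigma> \<delta> =
    (\<lambda>z. (1 + of_int (\<delta> 2) * z) / real (\<sigma> 1)) ` cyl n (\<sigma> \<circ> Suc) (tail_signs \<delta>)"
proof (intro set_eqI iffI)
  note head = in_Sigma_head[OF \<Sigma> n]
  note mem = mem_cyl_Suc_iff[where \<delta>=\<delta> and \<sigma>=\<sigma>, OF n head(3)]
  fix x
  {
    assume "x \<in> cyl (Suc n) \<sigma> \<delta>"
    then have x: "0 < x" "x < 1" "d1 x = int (\<sigma> 1)" "s1 x = \<delta> 2"
      and Tx: "Tmap x \<in> cyl n (\<sigma> \<circ> Suc) (tail_signs \<delta>)"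
      using mem by auto
    have "x = (1 + of_int (\<delta> 2) * Tmap x) / real (\<sigma> 1)"
      using Tmap_range_and_expansion(3)[OF x(1,2)] x(3,4) by simp
    with Tx show "x \<in> (\<lambda>z. (1 + of_int (\<delta> 2) * z) / real (\<sigma> 1)) ` cyl n (\<sigma> \<circ> Suc) (tail_signs \<delta>)"
      by blast
  next
    assume "x \<in> (\<lambda>z. (1 + of_int (\<delta> 2) * z) / real (\<sigma> 1)) ` cyl n (\<sigma> \<circ> Suc) (tail_signs \<delta>)"
    then obtain z where z: "z \<in> cyl n (\<sigma> \<circ> Suc) (tail_signs \<delta>)"
      and x: "x = (1 + of_int (\<delta> 2) * z) / real (\<sigma> 1)"
      by blast
    have "0 < z" "z < 1" "d1 z = int (\<sigma> 2)"
      using z n unfolding cyl_def by (auto simp: digit_Suc_0 numeral_2_eq_2 dest!: bspec[where x=1])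
    then have "(real (\<sigma> 2) - 1) * z < 1"
      using d1_less_inverse_plus_one[of z] by (simp add: field_simps)
    moreover have "(real (\<sigma> 1) - of_int (\<delta> 2)) * z \<le> (real (\<sigma> 2) - 1) * z"
      using head(4) \<open>0 < z\<close> by (intro mult_right_mono) auto
    ultimately have "(real (\<sigma> 1) - of_int (\<delta> 2)) * z < 1" by linarith
    from inverse_branch[OF head(1,2,3) \<open>0 < z\<close> this] z show "x \<in> cyl (Suc n) \<sigma> \<delta>"
      unfolding mem x by simp
  }
qed

definition digit_prod :: "nat \<Rightarrow> (nat \<Rightarrow> nat) \<Rightarrow> real" where
  "digit_prod n \<sigma> = (\<Prod>j\<in>{1..<n}. real (\<sigma> j))"

definition truncated_expansion :: "nat \<Rightarrow> (nat \<Rightarrow> nat) \<Rightarrow> (nat \<Rightarrow> int) \<Rightarrow> real" where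
  "truncated_expansion n \<sigma> \<delta> = (\<Sum>i\<in>{1..<n}. of_int (\<delta> i) / digit_prod (Suc i) \<sigma>)"

lemma digit_prod_Suc: "n \<ge> 1 \<Longrightarrow> digit_prod (Suc n) \<sigma> = real (\<sigma> 1) * digit_prod n (\<sigma> \<circ> Suc)"
  unfolding digit_prod_def
  by (simp add: prod.atLeast_Suc_lessThan prod.shift_bounds_Suc_ivl del: prod.op_ivl_Suc)

lemma digit_prod_pos: "in_Sigma n \<sigma> \<delta> \<Longrightarrow> 0 < digit_prod n \<sigma>"
  unfolding digit_prod_def by (intro prod_pos) (use in_Sigma_digit_ge2[of n \<sigma> \<delta>] in fastforce)

lemma truncated_expansion_Suc:
  assumes n: "n \<ge> 1" and \<delta>: "\<delta> 1 = 1" "\<delta> 2 = 1 \<or> \<delta> 2 = -1"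
  shows "truncated_expansion (Suc n) \<sigma> \<delta> =
    (1 + of_int (\<delta> 2) * truncated_expansion n (\<sigma> \<circ> Suc) (tail_signs \<delta>)) / real (\<sigma> 1)"
proof -
  have "truncated_expansion (Suc n) \<sigma> \<delta> =
      of_int (\<delta> 1) / digit_prod 2 \<sigma> + (\<Sum>i\<in>{1..<n}. of_int (\<delta> (Suc i)) / digit_prod (Suc (Suc i)) \<sigma>)"
    unfolding truncated_expansion_def using n
    by (simp add: sum.atLeast_Suc_lessThan sum.shift_bounds_Suc_ivl numeral_2_eq_2 del: sum.op_ivl_Suc)
  also have "\<dots> = 1 / real (\<sigma> 1) +
      (\<Sum>i\<in>{1..<n}. of_int (\<delta> 2) * (of_int (tail_signs \<delta> i) / digit_prod (Suc i) (\<sigma> \<circ> Suc)) / real (\<sigma> 1))"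
  proof -
    have "of_int (\<delta> (Suc i)) / digit_prod (Suc (Suc i)) \<sigma> =
        of_int (\<delta> 2) * (of_int (tail_signs \<delta> i) / digit_prod (Suc i) (\<sigma> \<circ> Suc)) / real (\<sigma> 1)" for i
      by (simp add: digit_prod_Suc ac_simps flip: tail_signs_cancel[where \<delta>=\<delta>, OF \<delta>(2), of i])
    moreover have "digit_prod 2 \<sigma> = real (\<sigma> 1)" by (simp add: digit_prod_def numeral_2_eq_2)
    ultimately show ?thesis using \<delta>(1) by simp
  qed
  also have "\<dots> = (1 + of_int (\<delta> 2) * truncated_expansion n (\<sigma> \<circ> Suc) (tail_signs \<delta>)) / real (\<sigma> 1)"
    unfolding truncated_expansion_def add_divide_distrib sum_distrib_left sum_divide_distrib ..
  finally show ?thesis .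
qed

lemma cyl_eq_image:
  "in_Sigma n \<sigma> \<delta> \<Longrightarrow> cyl n \<sigma> \<delta> =
    (\<lambda>y. truncated_expansion n \<sigma> \<delta> + of_int (\<delta> n) * y / digit_prod n \<sigma>) ` first_digit_set (\<sigma> n)"
proof (induction n arbitrary: \<sigma> \<delta>)
  case 0
  then show ?case by (simp add: in_Sigma_def)
next
  case (Suc n)
  have "\<delta> 1 = 1" using Suc.prems by (simp add: in_Sigma_def)
  show ?case
  proof (cases "n = 0")
    case True
    with cyl_1 \<open>\<delta> 1 = 1\<close> show ?thesis
      by (simp add: truncated_expansion_def digit_prod_def)
  next
    case False
    then have n: "n \<ge> 1" by simp
    note head = in_Sigma_head[OF Suc.prems n]
    have "cyl (Suc n) \<sigma> \<delta> = (\<lambda>y. (1 + of_int (\<delta> 2) * (truncated_expansion n (\<sigma> \<circ> Suc) (tail_signs \<delta>) +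
        of_int (tail_signs \<delta> n) * y / digit_prod n (\<sigma> \<circ> Suc))) / real (\<sigma> 1)) ` first_digit_set (\<sigma> (Suc n))"
      unfolding cyl_Suc[OF Suc.prems n] Suc.IH[OF in_Sigma_tail[OF Suc.prems n]] image_image by simp
    also have "\<dots> = (\<lambda>y. truncated_expansion (Suc n) \<sigma> \<delta> + of_int (\<delta> (Suc n)) * y / digit_prod (Suc n) \<sigma>) `
        first_digit_set (\<sigma> (Suc n))"
    proof (rule image_cong[OF refl])
      fix y
      have "of_int (\<delta> 2) * (of_int (tail_signs \<delta> n) * y) = real_of_int (\<delta> (Suc n)) * y"
        using tail_signs_cancel[where \<delta>=\<delta>, OF head(3)] by (metis mult.assoc of_int_mult)
      then show "(1 + of_int (\<delta> 2) * (truncated_expansion n (\<sigma> \<circ> Suc) (tail_signs \<delta>) +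
          of_int (tail_signs \<delta> n) * y / digit_prod n (\<sigma> \<circ> Suc))) / real (\<sigma> 1) =
          truncated_expansion (Suc n) \<sigma> \<delta> + of_int (\<delta> (Suc n)) * y / digit_prod (Suc n) \<sigma>"
        by (simp add: truncated_expansion_Suc[OF n \<open>\<delta> 1 = 1\<close> head(3)] digit_prod_Suc[OF n]
            add_divide_distrib distrib_left mult.commute[of "digit_prod n (\<sigma> \<circ> Suc)"])
    qed
    finally show ?thesis .
  qed
qed

section \<open>Lengths of cylinder sets\<close>

lemma image_affine_greaterThanLessThan:
  fixes a c l r :: real
  shows "0 < c \<Longrightarrow> (\<lambda>y. a + c * y) ` {l<..<r} = {a + c * l<..<a + c * r}"
    and "c < 0 \<Longrightarrow> (\<lambda>y. a + c * y) ` {l<..<r} = {a + c * r<..<a + c * l}"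
proof -
  have image: "x \<in> (\<lambda>y. a + c * y) ` {l<..<r} \<longleftrightarrow> l < (x - a) / c \<and> (x - a) / c < r"
    if "c \<noteq> 0" for x
    using that by (auto simp: image_iff intro!: bexI[of _ "(x - a) / c"])
  show "0 < c \<Longrightarrow> (\<lambda>y. a + c * y) ` {l<..<r} = {a + c * l<..<a + c * r}"
    by (intro set_eqI) (auto simp: image pos_less_divide_eq pos_divide_less_eq mult.commute[of l] mult.commute[of r])
  show "c < 0 \<Longrightarrow> (\<lambda>y. a + c * y) ` {l<..<r} = {a + c * r<..<a + c * l}"
    by (intro set_eqI) (auto simp: image neg_less_divide_eq neg_divide_less_eq mult.commute[of l] mult.commute[of r])
qed

lemma measure_image_affine_greaterThanLessThan:
  fixes a c l r :: real
  assumes "l \<le> r"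
  shows "measure lborel ((\<lambda>y. a + c * y) ` {l<..<r}) = \<bar>c\<bar> * (r - l)"
proof (cases c "0 :: real" rule: linorder_cases)
  case less
  moreover have "c * r \<le> c * l" using less assms by (simp add: mult_left_mono_neg)
  ultimately show ?thesis
    unfolding image_affine_greaterThanLessThan(2)[OF less] by (simp add: algebra_simps)
next
  case equal
  then show ?thesis by (cases "l < r") (auto simp: image_constant_conv)
next
  case greater
  moreover have "c * l \<le> c * r" using greater assms by (simp add: mult_left_mono)
  ultimately show ?thesis
    unfolding image_affine_greaterThanLessThan(1)[OF greater] by (simp add: algebra_simps)
qed

lemma affine_image_first_digit_set_even:
  fixes a c :: real
  assumes "even m" "m \<ge> 2"
  shows "0 < c \<Longrightarrow> (\<lambda>y. a + c * y) ` first_digit_set m =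
      {a + c / (real m + 1)<..<a + c / (real m - 1)}"
    and "c < 0 \<Longrightarrow> (\<lambda>y. a + c * y) ` first_digit_set m =
      {a + c / (real m - 1)<..<a + c / (real m + 1)}"
    and "measure lborel ((\<lambda>y. a + c * y) ` first_digit_set m) =
      2 * \<bar>c\<bar> / ((real m - 1) * (real m + 1))"
proof -
  have ordered: "1 / (real m + 1) \<le> 1 / (real m - 1)" using assms(2) by (simp add: frac_le)
  note interval = first_digit_set_even[OF assms]
  show "0 < c \<Longrightarrow> (\<lambda>y. a + c * y) ` first_digit_set m =
      {a + c / (real m + 1)<..<a + c / (real m - 1)}"
    "c < 0 \<Longrightarrow> (\<lambda>y. a + c * y) ` first_digit_set m =
      {a + c / (real m - 1)<..<a + c / (real m + 1)}"
    unfolding interval by (simp_all add: image_affine_greaterThanLessThan)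
  show "measure lborel ((\<lambda>y. a + c * y) ` first_digit_set m) =
      2 * \<bar>c\<bar> / ((real m - 1) * (real m + 1))"
    using assms(2) unfolding interval measure_image_affine_greaterThanLessThan[OF ordered]
    by (simp add: field_simps)
qed

theorem proposition2p2:
  fixes n :: nat and \<sigma> :: "nat \<Rightarrow> nat" and \<delta> :: "nat \<Rightarrow> int"
  assumes "in_Sigma n \<sigma> \<delta>"
  defines "S \<equiv> (\<Sum>i\<in>{1..<n}. real_of_int (\<delta> i) / (\<Prod>j\<in>{1..i}. real (\<sigma> j)))"
  defines "x1 \<equiv> S + real_of_int (\<delta> n) / ((\<Prod>j\<in>{1..<n}. real (\<sigma> j)) * (real (\<sigma> n) - 1))"
  defines "x2 \<equiv> S + real_of_int (\<delta> n) / ((\<Prod>j\<in>{1..<n}. real (\<sigma> j)) * (real (\<sigma> n) + 1))"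
  shows "(odd (\<sigma> n) \<longrightarrow>
            (\<exists>y. cyl n \<sigma> \<delta> = {y}) \<and> measure lborel (cyl n \<sigma> \<delta>) = 0) \<and>
         (even (\<sigma> n) \<longrightarrow>
            (\<delta> n = -1 \<longrightarrow> cyl n \<sigma> \<delta> = {x1<..<x2}) \<and>
            (\<delta> n = 1 \<longrightarrow> cyl n \<sigma> \<delta> = {x2<..<x1}) \<and>
            measure lborel (cyl n \<sigma> \<delta>) =
              2 / ((\<Prod>j\<in>{1..<n}. real (\<sigma> j)) * (real (\<sigma> n) - 1) * (real (\<sigma> n) + 1)))"
proof -
  have n: "n \<in> {1..n}" using assms(1) by (simp add: in_Sigma_def)
  have \<sigma>: "\<sigma> n \<ge> 2" and \<delta>: "\<delta> n = 1 \<or> \<delta> n = -1" and Q: "0 < digit_prod n \<sigma>"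
    using in_Sigma_digit_ge2[OF assms(1) n] in_Sigma_sign[OF assms(1) n] digit_prod_pos[OF assms(1)] .
  define c where "c = of_int (\<delta> n) / digit_prod n \<sigma>"
  have cyl: "cyl n \<sigma> \<delta> = (\<lambda>y. S + c * y) ` first_digit_set (\<sigma> n)"
    unfolding cyl_eq_image[OF assms(1)] S_def c_def truncated_expansion_def
    by (simp add: digit_prod_def atLeastLessThanSuc_atLeastAtMost)
  have x1: "x1 = S + c / (real (\<sigma> n) - 1)" and x2: "x2 = S + c / (real (\<sigma> n) + 1)"
    unfolding x1_def x2_def c_def digit_prod_def by simp_all
  show ?thesis
  proof (intro conjI impI)
    assume "odd (\<sigma> n)"
    then have "first_digit_set (\<sigma> n) = {1 / real (\<sigma> n)}" using \<sigma> by (rule first_digit_set_odd)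
    then show "\<exists>y. cyl n \<sigma> \<delta> = {y}" "measure lborel (cyl n \<sigma> \<delta>) = 0"
      unfolding cyl by auto
  next
    assume "even (\<sigma> n)"
    note image = affine_image_first_digit_set_even[OF this \<sigma>, where a=S and c=c, folded cyl]
    show "cyl n \<sigma> \<delta> = {x1<..<x2}" if "\<delta> n = -1"
      using that Q by (simp add: image(2) x1 x2 c_def)
    show "cyl n \<sigma> \<delta> = {x2<..<x1}" if "\<delta> n = 1"
      using that Q by (simp add: image(1) x1 x2 c_def)
    show "measure lborel (cyl n \<sigma> \<delta>) =
        2 / ((\<Prod>j\<in>{1..<n}. real (\<sigma> j)) * (real (\<sigma> n) - 1) * (real (\<sigma> n) + 1))"
      using \<delta> Q unfolding image(3) c_def digit_prod_def by auto
  qed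
qed

end
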